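(* Let $p\in(0,1)$, $d\ge2$ an integer, $\alpha>0$, $\beta=(d-1)\big(\frac{p}{d-p}-\alpha\big)$ and $0<s<\beta$. Define for $u\in(-1,0)$ $$f_{\alpha,s}(u)=\ln(1+pu)+\alpha\ln(-u)-(d-1)\Big(\frac{p}{d-p}-\alpha\Big)\ln(1+u)+s\big(\ln(1+u)-\ln(1-1/d)\big).$$ Then $f_{\alpha,s}$ has two stationary points $u_{-,s},u_{+,s}$ with $-1<u_{-,s}<-1/d<u_{+,s}<0$. Moreover, $u_{-,s}$ is strictly decreasing in $s$ and $u_{+,s}$ is strictly increasing in $s$. *)

theory Defs
  imports Complex_Main
begin

definition f_alpha_s :: "real \<Rightarrow> nat \<Rightarrow> real \<Rightarrow> real \<Rightarrow> real \<Rightarrow> real" where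
  "f_alpha_s p d \<alpha> s u =
     ln (1 + p * u) + \<alpha> * ln (- u)
     - (real d - 1) * (p / (real d - p) - \<alpha>) * ln (1 + u)
     + s * (ln (1 + u) - ln (1 - 1 / real d))"

definition stationary_pt :: "(real \<Rightarrow> real) \<Rightarrow> real \<Rightarrow> bool" where
  "stationary_pt g u \<longleftrightarrow> (g has_real_derivative 0) (at u)"

end

theory Submission
  imports Defs
begin

text \<open>
  On (-1,0) the derivative of f is p/(1+pu) + \<alpha>/u - g/(1+u) with g = \<beta> - s; multiplying by the
  nonvanishing factor u(1+pu)(1+u) turns stationarity into Q_g(u) = 0 for a quadratic Q_g.
  Since Q_g(-1) = g(1-p) > 0, Q_g(0) = \<alpha> > 0 and d^2 Q_g(-1/d) = (d-p)(g-\<beta>) < 0, Q_g has one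
  root on each side of -1/d and is negative exactly between them. Moreover Q_g(u) is strictly
  increasing in g on (-1,0), its g-derivative being -u(1+pu) > 0: raising s lowers g and pushes
  Q_g down, so the old roots lie strictly between the new ones.
\<close>

lemma quadratic_eq_factored:
  fixes A B C a b u :: "'a::field"
  assumes "a \<noteq> b" "A*a^2 + B*a + C = 0" "A*b^2 + B*b + C = 0"
  shows "A*u^2 + B*u + C = A*(u-a)*(u-b)"
proof -
  define k l where "k = B + A*(a+b)" and "l = C - A*a*b"
  have rest: "A*x^2 + B*x + C - A*(x-a)*(x-b) = k*x + l" for x
    unfolding k_def l_def by (simp add: algebra_simps power2_eq_square)
  have "k*a + l = 0" "k*b + l = 0"
    using rest[of a] rest[of b] assms(2,3) by simp_all
  moreover have "k*(a-b) = (k*a + l) - (k*b + l)"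
    by (simp add: algebra_simps)
  ultimately have "k*(a-b) = 0"
    by simp
  with assms(1) have "k = 0"
    by simp
  with \<open>k*a + l = 0\<close> have "l = 0"
    by simp
  show ?thesis
    using rest[of u] \<open>k = 0\<close> \<open>l = 0\<close> by simp
qed

definition negative_between_roots :: "(real \<Rightarrow> real) \<Rightarrow> real \<Rightarrow> real \<Rightarrow> bool" where
  "negative_between_roots q a b \<longleftrightarrow>
     a < b \<and> (\<forall>u. q u = 0 \<longleftrightarrow> u = a \<or> u = b) \<and> (\<forall>u. q u < 0 \<longleftrightarrow> a < u \<and> u < b)"

lemma negative_between_roots_spread:
  assumes "negative_between_roots q a b" "negative_between_roots r a' b'"
    and "r a < q a" "r b < q b"
  shows "a' < a \<and> b < b'"
proof -
  have "q a = 0" "q b = 0"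
    using assms(1) unfolding negative_between_roots_def by auto
  with assms(3,4) have "r a < 0" "r b < 0"
    by auto
  with assms(2) show ?thesis
    unfolding negative_between_roots_def by auto
qed

lemma quadratic_roots_from_sign_changes:
  fixes A B C x y z :: real
  assumes "x < y" "y < z"
    and "0 < A*x^2 + B*x + C" "A*y^2 + B*y + C < 0" "0 < A*z^2 + B*z + C"
  shows "\<exists>a b. x < a \<and> a < y \<and> y < b \<and> b < z \<and>
           negative_between_roots (\<lambda>u. A*u^2 + B*u + C) a b"
proof -
  let ?q = "\<lambda>u. A*u^2 + B*u + C"
  have cont: "continuous_on S ?q" for S
    by (intro continuous_intros)
  obtain a where a: "x \<le> a" "a \<le> y" "?q a = 0"
    using IVT2'[of ?q y 0 x] assms cont by force
  obtain b where b: "y \<le> b" "b \<le> z" "?q b = 0"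
    using IVT'[of ?q y 0 z] assms cont by force
  have ab: "x < a" "a < y" "y < b" "b < z"
    using a b assms by (auto simp: order.order_iff_strict)
  have factored: "?q u = A * ((u-a)*(u-b))" for u
    using ab a(3) b(3) quadratic_eq_factored[of a b A B C u] by (simp add: mult.assoc)
  have "0 < (x-a)*(x-b)"
    using ab by (intro mult_neg_neg) auto
  with assms(3) factored[of x] have "0 < A"
    by (simp add: zero_less_mult_iff)
  then have "negative_between_roots ?q a b"
    using ab unfolding negative_between_roots_def factored by (auto simp: mult_less_0_iff)
  with ab show ?thesis
    by blast
qed

lemma one_plus_mult_pos:
  fixes p u :: real
  assumes "0 \<le> p" "p \<le> 1" "-1 < u"
  shows "0 < 1 + p*u"
proof (cases "p = 1")
  case False
  have "-p \<le> p*u"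
    using mult_left_mono[of "-1" u p] assms by simp
  with False assms(2) show ?thesis
    by simp
qed (use assms in simp)

text \<open>The numerator u(1+pu)(1+u) f'(u) of the derivative, for a net coefficient g of -ln(1+u).\<close>
definition stat_quadratic :: "real \<Rightarrow> real \<Rightarrow> real \<Rightarrow> real \<Rightarrow> real" where
  "stat_quadratic p \<alpha> g u = p*(1+\<alpha>-g)*u^2 + (p + \<alpha>*(1+p) - g)*u + \<alpha>"

lemma stat_quadratic_diff:
  "stat_quadratic p \<alpha> g u - stat_quadratic p \<alpha> g' u = (g' - g) * (u*(1+p*u))"
  unfolding stat_quadratic_def by (simp add: algebra_simps power2_eq_square)

lemma stat_quadratic_strict_mono:
  assumes "0 \<le> p" "p \<le> 1" "-1 < u" "u < 0" "g < g'"
  shows "stat_quadratic p \<alpha> g u < stat_quadratic p \<alpha> g' u"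
proof -
  have "u*(1+p*u) < 0"
    using one_plus_mult_pos[OF assms(1-3)] assms(4) by (simp add: mult_neg_pos)
  then have "(g' - g) * (u*(1+p*u)) < 0"
    using assms(5) by (simp add: mult_pos_neg)
  then show ?thesis
    using stat_quadratic_diff[of p \<alpha> g u g'] by simp
qed

lemma stat_quadratic_at_inverse:
  fixes D :: real
  assumes "D \<noteq> 0" "D \<noteq> p"
  shows "D^2 * stat_quadratic p \<alpha> g (-1/D) = (D - p) * (g - (D - 1)*(p/(D - p) - \<alpha>))"
  using assms unfolding stat_quadratic_def
  by (simp add: field_simps power2_eq_square)

lemma f_alpha_s_has_derivative:
  assumes "0 \<le> p" "p \<le> 1" "-1 < u" "u < 0"
  shows "(f_alpha_s p d \<alpha> s has_real_derivative
           p/(1+p*u) + \<alpha>/u - ((real d - 1)*(p/(real d - p) - \<alpha>) - s)/(1+u)) (at u)"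
proof -
  have "0 < 1 + p*u" "0 < 1 + u" "0 < - u"
    using one_plus_mult_pos[OF assms(1-3)] assms(3,4) by auto
  then show ?thesis
    unfolding f_alpha_s_def[abs_def]
    by (auto intro!: derivative_eq_intros simp: diff_divide_distrib)
qed

lemma stationary_pt_f_alpha_s_iff:
  assumes "0 \<le> p" "p \<le> 1" "-1 < u" "u < 0"
    and "\<beta> = (real d - 1) * (p / (real d - p) - \<alpha>)"
  shows "stationary_pt (f_alpha_s p d \<alpha> s) u \<longleftrightarrow> stat_quadratic p \<alpha> (\<beta> - s) u = 0"
proof -
  let ?f' = "p/(1+p*u) + \<alpha>/u - (\<beta> - s)/(1+u)"
  have pos: "0 < 1 + p*u" "0 < 1 + u"
    using one_plus_mult_pos[OF assms(1-3)] assms(3) by auto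
  have "stationary_pt (f_alpha_s p d \<alpha> s) u \<longleftrightarrow> ?f' = 0"
    using f_alpha_s_has_derivative[OF assms(1-4)] DERIV_unique
    unfolding stationary_pt_def assms(5) by metis
  also have "\<dots> \<longleftrightarrow> ?f' * (u*(1+p*u)*(1+u)) = 0"
    using pos assms(4) by simp
  also have "?f' * (u*(1+p*u)*(1+u)) = p*u*(1+u) + \<alpha>*(1+p*u)*(1+u) - (\<beta> - s)*u*(1+p*u)"
  proof -
    have "p/(1+p*u) * (u*(1+p*u)*(1+u)) = p*u*(1+u)"
      "\<alpha>/u * (u*(1+p*u)*(1+u)) = \<alpha>*(1+p*u)*(1+u)"
      "(\<beta> - s)/(1+u) * (u*(1+p*u)*(1+u)) = (\<beta> - s)*u*(1+p*u)"
      using pos assms(4) by (simp_all add: field_simps)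
    then show ?thesis
      by (simp only: left_diff_distrib distrib_right)
  qed
  also have "\<dots> = stat_quadratic p \<alpha> (\<beta> - s) u"
    unfolding stat_quadratic_def by (simp add: algebra_simps power2_eq_square)
  finally show ?thesis .
qed

lemma stat_quadratic_roots:
  fixes p \<alpha> \<beta> g :: real and d :: nat
  assumes "0 < p" "p < 1" "d \<ge> 2" "0 < \<alpha>"
    and "\<beta> = (real d - 1) * (p / (real d - p) - \<alpha>)" and "0 < g" "g < \<beta>"
  shows "\<exists>a b. -1 < a \<and> a < -1/real d \<and> -1/real d < b \<and> b < 0 \<and>
           negative_between_roots (stat_quadratic p \<alpha> g) a b"
proof -
  have d: "2 \<le> real d" "p < real d"
    using assms(2,3) by auto
  have "(real d)^2 * stat_quadratic p \<alpha> g (-1/real d) < 0"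
    using stat_quadratic_at_inverse[of "real d" p \<alpha> g] d assms(5,7)
    by (simp add: mult_pos_neg)
  then have "stat_quadratic p \<alpha> g (-1/real d) < 0"
    by (simp add: mult_less_0_iff)
  moreover have "0 < stat_quadratic p \<alpha> g (-1)"
    using assms(2,6) unfolding stat_quadratic_def by (simp add: algebra_simps)
  moreover have "0 < stat_quadratic p \<alpha> g 0"
    using assms(4) unfolding stat_quadratic_def by simp
  moreover have "-1 < -1/real d" "-1/real d < 0"
    using d by (auto simp: field_simps)
  ultimately show ?thesis
    using quadratic_roots_from_sign_changes[of "-1" "-1/real d" 0 "p*(1+\<alpha>-g)"]
    unfolding stat_quadratic_def[abs_def] by blast
qed

theorem lemma5p10:
  fixes p \<alpha> \<beta> :: real and d :: nat
  assumes "0 < p" "p < 1" "d \<ge> 2" "\<alpha> > 0"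
    and "\<beta> = (real d - 1) * (p / (real d - p) - \<alpha>)"
  shows "\<exists>um up :: real \<Rightarrow> real.
     (\<forall>s\<in>{0<..<\<beta>}.
        {u\<in>{-1<..<0}. stationary_pt (f_alpha_s p d \<alpha> s) u} = {um s, up s} \<and>
        -1 < um s \<and> um s < -1 / real d \<and> -1 / real d < up s \<and> up s < 0) \<and>
     (\<forall>s\<in>{0<..<\<beta>}. \<forall>t\<in>{0<..<\<beta>}. s < t \<longrightarrow> um t < um s \<and> up s < up t)"
proof -
  let ?Q = "\<lambda>s. stat_quadratic p \<alpha> (\<beta> - s)"
  have "\<forall>s\<in>{0<..<\<beta>}. \<exists>a b. -1 < a \<and> a < -1/real d \<and> -1/real d < b \<and> b < 0 \<and>
          negative_between_roots (?Q s) a b"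
    using stat_quadratic_roots[OF assms] by simp
  then obtain um up where bounds: "\<And>s. s \<in> {0<..<\<beta>} \<Longrightarrow>
      -1 < um s \<and> um s < -1/real d \<and> -1/real d < up s \<and> up s < 0"
    and roots: "\<And>s. s \<in> {0<..<\<beta>} \<Longrightarrow> negative_between_roots (?Q s) (um s) (up s)"
    by metis
  have stationary: "{u\<in>{-1<..<0}. stationary_pt (f_alpha_s p d \<alpha> s) u} = {um s, up s}"
    if "s \<in> {0<..<\<beta>}" for s
    using roots[OF that] bounds[OF that] stationary_pt_f_alpha_s_iff[OF _ _ _ _ assms(5)] assms(1,2)
    unfolding negative_between_roots_def by auto
  have moving: "um t < um s \<and> up s < up t"
    if "s \<in> {0<..<\<beta>}" "t \<in> {0<..<\<beta>}" "s < t" for s t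
    using negative_between_roots_spread[OF roots[OF that(1)] roots[OF that(2)]]
      stat_quadratic_strict_mono bounds[OF that(1)] assms(1,2) \<open>s < t\<close> by auto
  show ?thesis
    by (rule exI[of _ um], rule exI[of _ up]) (use stationary bounds moving in blast)
qed

end
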